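(* Let $f$ be a $\beta$-Hölder smooth function on $[0,1]^d$ with $\frac{\partial^{\bm\alpha}f(\bm\eta/K)}{\bm\alpha!}\in[-1,1]$ for all relevant $\bm\alpha,\bm\eta$. Given $s\in\mathbb{N}^+$, $\bm\alpha\in\mathbb{N}_0^d$ with $\|\bm\alpha\|_1\le s$, $K\in\mathbb{N}$ and $\bm\eta\in\{0,1,\dots,K-1\}^d$, there exists a PQC $U^{\bm\alpha}_{\bm\eta}(\bm x)$ such that $$\langle\bm\eta,0|\langle +|^{\otimes d}\,U^{\bm\alpha}_{\bm\eta}(\bm x)\,|\bm\eta,0\rangle|+\rangle^{\otimes d}=\frac{\partial^{\bm\alpha}f(\bm\eta/K)}{\bm\alpha!}\Bigl(\bm x-\frac{\bm\eta}{K}\Bigr)^{\bm\alpha}.$$ The width of the PQC is $O(d\log K)$, its depth is $O(K^d+s)$, and its number of parameters is at most $K^d+s+d$.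
   Context: $\partial^{\bm\alpha}=\partial_1^{\alpha_1}\cdots\partial_d^{\alpha_d}$, $\bm\alpha!=\alpha_1!\cdots\alpha_d!$, $\bm y^{\bm\alpha}=y_1^{\alpha_1}\cdots y_d^{\alpha_d}$. $|\bm\eta\rangle=|\eta_1\rangle\otimes\cdots\otimes|\eta_d\rangle$ with each $|\eta_i\rangle$ a computational basis state on $\lceil\log_2K\rceil$ qubits; $|+\rangle=(|0\rangle+|1\rangle)/\sqrt2$. A parameterized quantum circuit (PQC) is a circuit built from CNOT gates, Hadamard gates and single-qubit gates: Pauli rotations $R_X(\theta)=e^{-i\theta X/2}$, $R_Y$, $R_Z(\theta)=e^{-i\theta Z/2}$ with trainable real angles not depending on the input (possibly controlled on basis states of other registers), or data-encoding gates $S(y)=e^{i\arccos(y)X}=\begin{pmatrix} y & i\sqrt{1-y^2}\\ i\sqrt{1-y^2} & y\end{pmatrix}$ applied to a data value $y$ (here a coordinate of $\bm x-\bm\eta/K$). Width = number of qubits, depth = circuit depth, number of parameters = number of trainable angles. *)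

theory Defs
  imports "HOL-Analysis.Analysis"
begin

text \<open>Vectors in R^d are functions nat => real; only coordinates i < d are meaningful,
  points of the cube are normalised to 0 outside {0..<d}.\<close>

definition cube :: "nat \<Rightarrow> (nat \<Rightarrow> real) set" where
  "cube d = {x. (\<forall>i<d. 0 \<le> x i \<and> x i \<le> 1) \<and> (\<forall>i. d \<le> i \<longrightarrow> x i = 0)}"

definition multi_index :: "nat \<Rightarrow> (nat \<Rightarrow> nat) \<Rightarrow> bool" where
  "multi_index d \<alpha> \<longleftrightarrow> (\<forall>i. d \<le> i \<longrightarrow> \<alpha> i = 0)"

definition mi_norm :: "nat \<Rightarrow> (nat \<Rightarrow> nat) \<Rightarrow> nat" where
  "mi_norm d \<alpha> = (\<Sum>i<d. \<alpha> i)"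

definition mi_fact :: "nat \<Rightarrow> (nat \<Rightarrow> nat) \<Rightarrow> real" where
  "mi_fact d \<alpha> = (\<Prod>i<d. fact (\<alpha> i))"

definition mono_pow :: "nat \<Rightarrow> (nat \<Rightarrow> real) \<Rightarrow> (nat \<Rightarrow> nat) \<Rightarrow> real" where
  "mono_pow d y \<alpha> = (\<Prod>i<d. (y i) ^ (\<alpha> i))"

definition partial :: "nat \<Rightarrow> ((nat \<Rightarrow> real) \<Rightarrow> real) \<Rightarrow> (nat \<Rightarrow> real) \<Rightarrow> real" where
  "partial i g x = deriv (\<lambda>t. g (x(i := t))) (x i)"

definition dpow :: "nat \<Rightarrow> (nat \<Rightarrow> nat) \<Rightarrow> ((nat \<Rightarrow> real) \<Rightarrow> real) \<Rightarrow> (nat \<Rightarrow> real) \<Rightarrow> real" where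
  "dpow d \<alpha> g = foldr (\<lambda>i h. (partial i ^^ \<alpha> i) h) [0..<d] g"

definition grid_point :: "nat \<Rightarrow> nat \<Rightarrow> (nat \<Rightarrow> nat) \<Rightarrow> (nat \<Rightarrow> real)" where
  "grid_point d K \<eta> = (\<lambda>i. if i < d then real (\<eta> i) / real K else 0)"

definition tcoef :: "nat \<Rightarrow> ((nat \<Rightarrow> real) \<Rightarrow> real) \<Rightarrow> (nat \<Rightarrow> nat) \<Rightarrow> (nat \<Rightarrow> real) \<Rightarrow> real" where
  "tcoef d f \<alpha> p = dpow d \<alpha> f p / mi_fact d \<alpha>"

definition eucl_dist :: "nat \<Rightarrow> (nat \<Rightarrow> real) \<Rightarrow> (nat \<Rightarrow> real) \<Rightarrow> real" where
  "eucl_dist d x y = sqrt (\<Sum>i<d. (x i - y i)^2)"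

definition holder_smooth :: "nat \<Rightarrow> real \<Rightarrow> ((nat \<Rightarrow> real) \<Rightarrow> real) \<Rightarrow> bool" where
  "holder_smooth d \<beta> f \<longleftrightarrow> 0 < \<beta> \<and>
     (let n = nat (\<lceil>\<beta>\<rceil> - 1) in
       (\<forall>\<alpha>. multi_index d \<alpha> \<and> mi_norm d \<alpha> < n \<longrightarrow>
          (\<forall>x\<in>cube d. \<forall>i<d. (\<lambda>t. dpow d \<alpha> f (x(i := t))) differentiable (at (x i)))) \<and>
       (\<exists>L. \<forall>\<alpha>. multi_index d \<alpha> \<and> mi_norm d \<alpha> = n \<longrightarrow>
          (\<forall>x\<in>cube d. \<forall>y\<in>cube d.
             \<bar>dpow d \<alpha> f x - dpow d \<alpha> f y\<bar> \<le> L * eucl_dist d x y powr (\<beta> - real n))))"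

datatype axis = AX | AY | AZ

text \<open>Gates: Hadamard on a qubit; CNOT control target; Pauli rotation with axis, target,
  list of basis-state controls (qubit, required value) and trainable angle;
  data-encoding gate S(y_i) on a target qubit with data coordinate i.\<close>
datatype gate =
    Had nat
  | CNOT nat nat
  | Rot axis nat "(nat \<times> bool) list" real
  | Enc nat nat

text \<open>Single-qubit matrices, indexed by bool (False = |0>, True = |1>), row then column.\<close>
definition hmat :: "bool \<Rightarrow> bool \<Rightarrow> complex" where
  "hmat r c = (if r \<and> c then - 1 / sqrt 2 else 1 / sqrt 2)"

definition rotmat :: "axis \<Rightarrow> real \<Rightarrow> bool \<Rightarrow> bool \<Rightarrow> complex" where
  "rotmat a \<theta> r c = (case a of
      AX \<Rightarrow> (if r = c then cos (\<theta>/2) else - \<i> * sin (\<theta>/2))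
    | AY \<Rightarrow> (if r = c then cos (\<theta>/2) else if r then sin (\<theta>/2) else - sin (\<theta>/2))
    | AZ \<Rightarrow> (if r \<noteq> c then 0 else if r then exp (\<i> * \<theta>/2) else exp (- \<i> * \<theta>/2)))"

definition smat :: "real \<Rightarrow> bool \<Rightarrow> bool \<Rightarrow> complex" where
  "smat y r c = (if r = c then complex_of_real y else \<i> * sqrt (1 - y^2))"

type_synonym state = "(nat \<Rightarrow> bool) \<Rightarrow> complex"

definition apply1 :: "(bool \<Rightarrow> bool \<Rightarrow> complex) \<Rightarrow> nat \<Rightarrow> state \<Rightarrow> state" where
  "apply1 M q \<psi> = (\<lambda>b. \<Sum>v\<in>(UNIV :: bool set). M (b q) v * \<psi> (b(q := v)))"

fun gate_sem :: "(nat \<Rightarrow> real) \<Rightarrow> gate \<Rightarrow> state \<Rightarrow> state" where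
  "gate_sem y (Had q) \<psi> = apply1 hmat q \<psi>"
| "gate_sem y (CNOT c t) \<psi> = (\<lambda>b. if b c then \<psi> (b(t := \<not> b t)) else \<psi> b)"
| "gate_sem y (Rot a q cs \<theta>) \<psi> =
     (\<lambda>b. if (\<forall>(c, v)\<in>set cs. b c = v) then apply1 (rotmat a \<theta>) q \<psi> b else \<psi> b)"
| "gate_sem y (Enc q i) \<psi> = apply1 (smat (y i)) q \<psi>"

text \<open>Gates are applied in list order (head first).\<close>
definition circ_sem :: "(nat \<Rightarrow> real) \<Rightarrow> gate list \<Rightarrow> state \<Rightarrow> state" where
  "circ_sem y gs \<psi> = fold (gate_sem y) gs \<psi>"

fun gate_qubits :: "gate \<Rightarrow> nat set" where
  "gate_qubits (Had q) = {q}"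
| "gate_qubits (CNOT c t) = {c, t}"
| "gate_qubits (Rot a q cs \<theta>) = insert q (fst ` set cs)"
| "gate_qubits (Enc q i) = {q}"

fun wf_gate :: "nat \<Rightarrow> nat \<Rightarrow> gate \<Rightarrow> bool" where
  "wf_gate n d (Had q) \<longleftrightarrow> q < n"
| "wf_gate n d (CNOT c t) \<longleftrightarrow> c < n \<and> t < n \<and> c \<noteq> t"
| "wf_gate n d (Rot a q cs \<theta>) \<longleftrightarrow> q < n \<and> (\<forall>(c, v)\<in>set cs. c < n \<and> c \<noteq> q)"
| "wf_gate n d (Enc q i) \<longleftrightarrow> q < n \<and> i < d"

definition depth_step :: "gate \<Rightarrow> (nat \<Rightarrow> nat) \<Rightarrow> (nat \<Rightarrow> nat)" where
  "depth_step g lvl = (let t = Suc (Max (lvl ` gate_qubits g))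
                       in (\<lambda>q. if q \<in> gate_qubits g then t else lvl q))"

definition circ_depth :: "nat \<Rightarrow> gate list \<Rightarrow> nat" where
  "circ_depth n gs = Max (insert 0 (fold depth_step gs (\<lambda>_. 0) ` {..<n}))"

fun is_param :: "gate \<Rightarrow> bool" where
  "is_param (Rot a q cs \<theta>) = True"
| "is_param _ = False"

definition num_params :: "gate list \<Rightarrow> nat" where
  "num_params gs = length (filter is_param gs)"

definition basis :: "nat \<Rightarrow> (nat \<Rightarrow> bool) set" where
  "basis n = {b. \<forall>i. n \<le> i \<longrightarrow> \<not> b i}"

definition braket :: "nat \<Rightarrow> state \<Rightarrow> state \<Rightarrow> complex" where
  "braket n \<phi> \<psi> = (\<Sum>b\<in>basis n. cnj (\<phi> b) * \<psi> b)"

text \<open>Input state |eta,0>|+>^d on n = d*m + a + d qubits: qubits i*m+j (i<d, j<m) hold bit j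
  of eta_i (m = ceil(log2 K)), qubits d*m .. d*m+a-1 are ancillas in |0>, the last d qubits
  are each in |+>.\<close>
definition in_state :: "nat \<Rightarrow> nat \<Rightarrow> nat \<Rightarrow> (nat \<Rightarrow> nat) \<Rightarrow> state" where
  "in_state d m a \<eta> = (\<lambda>b.
     if (\<forall>i<d. \<forall>j<m. b (i*m + j) = odd (\<eta> i div 2^j)) \<and> (\<forall>k<a. \<not> b (d*m + k))
     then complex_of_real ((1 / sqrt 2) ^ d) else 0)"

definition reg_bits :: "nat \<Rightarrow> nat" where
  "reg_bits K = nat \<lceil>log 2 (real K)\<rceil>"

end

theory Submission
  imports Defs "HOL-Computational_Algebra.Fundamental_Theorem_Algebra"
begin

(* The target amplitude is c * prod_i y_i^(alpha_i) with |c| <= 1 and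
   y = x - eta/K, a product of one-variable polynomials, so it can be produced on a product state:
   the i-th qubit of the |+>^d register runs its own quantum signal processing (QSP) sequence of
   alpha_i encodings S(y_i) interleaved with Z-rotations, realising c*y^(alpha_0) on the first qubit
   and y^(alpha_i) on the others, while the eta register stays untouched.  This uses
   d*ceil(log2 K) + d qubits, depth 2|alpha| + 1 and d + |alpha| angles.

   Writing y = cos theta, a QSP sequence of length k sends |+> to a state with <+|-amplitude
   e^(-ik theta) A(e^(2i theta)), where A, B are real polynomials of degree <= k with
   A(z) z^k A(1/z) + B(z) z^k B(1/z) = z^k; conversely every such pair is reached, by peeling off one
   rotation and one encoding at a time.  The target c cos^k theta corresponds to A = c((1+z)/2)^k, and
   its partner B must satisfy B(z) z^k B(1/z) = z^k - c^2 ((1+z)/2)^(2k).  The right-hand side is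
   self-reciprocal and, divided by z^k, positive on the unit circle (for c^2 = 1 after dividing out
   the double zero at z = 1), so the Fejer-Riesz theorem provides B; it is proved by splitting off
   pairs of reciprocal roots, found with the fundamental theorem of algebra. *)

section \<open>Reversal of polynomials\<close>

(* rev_poly n p is z^n p(1/z), p being regarded as a polynomial of formal degree n. *)
definition rev_poly :: "nat \<Rightarrow> 'a::zero poly \<Rightarrow> 'a poly" where
  "rev_poly n p = Abs_poly (\<lambda>j. if j \<le> n then coeff p (n - j) else 0)"

lemma coeff_rev_poly: "coeff (rev_poly n p) j = (if j \<le> n then coeff p (n - j) else 0)"
  unfolding rev_poly_def by (subst coeff_Abs_poly[where n = n]) auto

lemma degree_rev_poly_le: "degree (rev_poly n p) \<le> n"
  by (rule degree_le) (auto simp: coeff_rev_poly)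

lemma poly_altdef_le:
  fixes p :: "'a::comm_semiring_1 poly"
  assumes "degree p \<le> n"
  shows "poly p x = (\<Sum>i\<le>n. coeff p i * x ^ i)"
proof -
  have "poly p x = (\<Sum>i\<le>degree p. coeff p i * x ^ i)" by (rule poly_altdef)
  also have "\<dots> = (\<Sum>i\<le>n. coeff p i * x ^ i)"
    by (rule sum.mono_neutral_left) (use assms in \<open>auto intro: le_degree\<close>)
  finally show ?thesis .
qed

lemma poly_rev_poly:
  fixes p :: "'a::field poly"
  assumes "degree p \<le> n" "x \<noteq> 0"
  shows "poly (rev_poly n p) x = x ^ n * poly p (inverse x)"
proof -
  have "poly (rev_poly n p) x = (\<Sum>j\<le>n. coeff p (n - j) * x ^ j)"
    by (subst poly_altdef_le[OF degree_rev_poly_le]) (simp add: coeff_rev_poly)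
  also have "\<dots> = (\<Sum>i\<le>n. coeff p i * x ^ (n - i))"
    using sum.atLeastAtMost_rev[of "\<lambda>j. coeff p (n - j) * x ^ j" 0 n]
    by (simp add: atMost_atLeast0)
  also have "\<dots> = (\<Sum>i\<le>n. x ^ n * (coeff p i * inverse x ^ i))"
    by (rule sum.cong) (use assms in \<open>auto simp: power_diff field_simps\<close>)
  also have "\<dots> = x ^ n * poly p (inverse x)"
    by (simp add: poly_altdef_le[OF assms(1)] sum_distrib_left)
  finally show ?thesis .
qed

lemma poly_eqI_nonzero:
  fixes p q :: "'a::{field, ring_char_0} poly"
  assumes "\<And>x. x \<noteq> 0 \<Longrightarrow> poly p x = poly q x"
  shows "p = q"
proof (rule ccontr)
  assume "p \<noteq> q"
  then have "finite {x. poly (p - q) x = 0}" by (intro poly_roots_finite) simp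
  moreover have "UNIV - {0} \<subseteq> {x. poly (p - q) x = 0}" using assms by auto
  ultimately have "finite (UNIV - {0::'a})" by (rule rev_finite_subset)
  then show False by (simp add: infinite_UNIV_char_0)
qed

lemma rev_poly_eqI:
  fixes p q :: "'a::{field, ring_char_0} poly"
  assumes "degree p \<le> n" "\<And>x. x \<noteq> 0 \<Longrightarrow> x ^ n * poly p (inverse x) = poly q x"
  shows "rev_poly n p = q"
  by (rule poly_eqI_nonzero) (simp add: poly_rev_poly assms)

lemma rev_poly_mult:
  fixes p q :: "'a::{field, ring_char_0} poly"
  assumes "degree p \<le> m" "degree q \<le> n"
  shows "rev_poly (m + n) (p * q) = rev_poly m p * rev_poly n q"
proof (rule rev_poly_eqI)
  show "degree (p * q) \<le> m + n"
    using degree_mult_le[of p q] assms by linarith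
  fix x :: 'a assume "x \<noteq> 0"
  then show "x ^ (m + n) * poly (p * q) (inverse x) = poly (rev_poly m p * rev_poly n q) x"
    by (simp add: poly_rev_poly assms power_add)
qed

lemma rev_poly_rev_poly: "degree p \<le> n \<Longrightarrow> rev_poly n (rev_poly n p) = p"
  by (rule poly_eqI) (auto simp: coeff_rev_poly coeff_eq_0)

lemma rev_poly_smult: "rev_poly n (smult c p) = smult c (rev_poly n p)"
  by (rule poly_eqI) (auto simp: coeff_rev_poly)

lemma rev_poly_add: "rev_poly n (p + q) = rev_poly n p + rev_poly n q"
  by (rule poly_eqI) (auto simp: coeff_rev_poly)

lemma rev_poly_diff: "rev_poly n (p - q) = rev_poly n p - rev_poly n (q::'a::ab_group_add poly)"
  by (rule poly_eqI) (auto simp: coeff_rev_poly)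

lemma rev_poly_const: "rev_poly 0 [:a:] = [:a:]"
  by (rule poly_eqI) (auto simp: coeff_rev_poly coeff_pCons split: nat.splits)

lemma rev_poly_linear: "rev_poly 1 [:a, b:] = [:b, a:]"
  by (rule poly_eqI) (auto simp: coeff_rev_poly coeff_pCons split: nat.splits)

lemma rev_poly_pCons_0: "rev_poly (Suc n) (pCons 0 p) = rev_poly n p"
  by (rule poly_eqI) (auto simp: coeff_rev_poly coeff_pCons Suc_diff_le split: nat.splits)

lemma rev_poly_Suc: "degree p \<le> n \<Longrightarrow> rev_poly (Suc n) p = pCons 0 (rev_poly n p)"
  by (rule poly_eqI) (auto simp: coeff_rev_poly coeff_pCons coeff_eq_0 split: nat.splits)

lemma rev_poly_monom: "k \<le> n \<Longrightarrow> rev_poly n (monom a k) = monom a (n - k)"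
  by (rule poly_eqI) (auto simp: coeff_rev_poly coeff_monom)

lemma rev_poly_sum: "rev_poly n (sum f A) = (\<Sum>x\<in>A. rev_poly n (f x))"
  by (rule poly_eqI) (simp add: coeff_rev_poly coeff_sum)

lemma coeff_mult_at_degree_bounds:
  fixes p q :: "'a::comm_semiring_1 poly"
  assumes "degree p \<le> m" "degree q \<le> n"
  shows "coeff (p * q) (m + n) = coeff p m * coeff q n"
proof -
  have "coeff p i * coeff q (m + n - i) = (if i = m then coeff p m * coeff q n else 0)" for i
  proof (cases "i = m")
    case False
    then have "m < i \<or> n < m + n - i" by auto
    then show ?thesis using assms False by (auto simp: coeff_eq_0)
  qed simp
  then show ?thesis by (simp add: coeff_mult)
qed

section \<open>The Fejer-Riesz theorem\<close>

abbreviation cpoly :: "real poly \<Rightarrow> complex poly" where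
  "cpoly p \<equiv> map_poly complex_of_real p"

lemma poly_cpoly_of_real: "poly (cpoly p) (complex_of_real x) = complex_of_real (poly p x)"
  by (induction p) (auto simp: map_poly_pCons)

lemma poly_cpoly_cnj: "poly (cpoly p) (cnj z) = cnj (poly (cpoly p) z)"
  by (induction p) (auto simp: map_poly_pCons)

lemma cpoly_add: "cpoly (p + q) = cpoly p + cpoly q"
  by (rule poly_eqI) (simp add: coeff_map_poly)

lemma cpoly_diff: "cpoly (p - q) = cpoly p - cpoly q"
  by (rule poly_eqI) (simp add: coeff_map_poly)

lemma cpoly_smult: "cpoly (smult c p) = smult (complex_of_real c) (cpoly p)"
  by (rule poly_eqI) (simp add: coeff_map_poly)

lemma cpoly_mult: "cpoly (p * q) = cpoly p * cpoly q"
  by (rule poly_eqI) (simp add: coeff_map_poly coeff_mult)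

lemma cpoly_power: "cpoly (p ^ n) = cpoly p ^ n"
  by (induction n) (simp_all add: cpoly_mult)

lemma cpoly_sum: "cpoly (sum f S) = (\<Sum>x\<in>S. cpoly (f x))"
  by (induction S rule: infinite_finite_induct) (simp_all add: cpoly_add)

lemma poly_cpoly_rev_poly:
  assumes "degree p \<le> n" "z \<noteq> 0"
  shows "poly (cpoly (rev_poly n p)) z = z ^ n * poly (cpoly p) (inverse z)"
proof -
  have "cpoly (rev_poly n p) = rev_poly n (cpoly p)"
    by (rule poly_eqI) (auto simp: coeff_rev_poly coeff_map_poly)
  then show ?thesis
    using assms by (simp add: poly_rev_poly degree_map_poly)
qed

definition positive_palindrome :: "nat \<Rightarrow> real poly \<Rightarrow> bool" where
  "positive_palindrome k R \<longleftrightarrow> degree R \<le> 2 * k \<and> rev_poly (2 * k) R = R \<and> poly R 0 \<noteq> 0 \<and>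
     (\<forall>z. cmod z = 1 \<longrightarrow> (\<exists>t>0. poly (cpoly R) z = complex_of_real t * z ^ k))"

lemma degree_positive_palindrome:
  assumes "positive_palindrome k R"
  shows "degree R = 2 * k"
proof -
  have "coeff R (2 * k) = coeff (rev_poly (2 * k) R) (2 * k)"
    using assms by (simp add: positive_palindrome_def)
  also have "\<dots> = coeff R 0" by (simp add: coeff_rev_poly)
  also have "\<dots> \<noteq> 0" using assms by (simp add: positive_palindrome_def poly_0_coeff_0)
  finally have "2 * k \<le> degree R" by (rule le_degree)
  then show ?thesis using assms by (simp add: positive_palindrome_def)
qed

(* On the unit circle z^m H(1/z) is z^m times the conjugate of H(z), so the factor H * rev_poly m H
   contributes |H(z)|^2 z^m. *)
lemma unit_circle_factor_cancel:
  assumes "cmod z = 1" "t > 0" "poly (cpoly (H * rev_poly m H * R')) z = complex_of_real t * z ^ k"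
    and "degree H = m" "m \<le> k"
  shows "\<exists>t'>0. poly (cpoly R') z = complex_of_real t' * z ^ (k - m)"
proof -
  have z0: "z \<noteq> 0" using assms(1) by auto
  have "z * cnj z = 1" using assms(1) by (simp flip: complex_norm_square)
  then have "inverse z = cnj z" by (rule inverse_unique)
  then have "poly (cpoly (rev_poly m H)) z = z ^ m * cnj (poly (cpoly H) z)"
    by (simp add: poly_cpoly_rev_poly assms(4) z0 poly_cpoly_cnj)
  moreover have "complex_of_real ((cmod (poly (cpoly H) z))\<^sup>2) = poly (cpoly H) z * cnj (poly (cpoly H) z)"
    by (rule complex_norm_square)
  ultimately have "complex_of_real t * z ^ k
      = complex_of_real ((cmod (poly (cpoly H) z))\<^sup>2) * z ^ m * poly (cpoly R') z"
    using assms(3) by (simp add: cpoly_mult mult_ac)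
  moreover have "poly (cpoly H) z \<noteq> 0"
    using assms(2,3) z0 by (auto simp: cpoly_mult)
  moreover have "z ^ k = z ^ m * z ^ (k - m)" using assms(5) by (simp flip: power_add)
  ultimately have "poly (cpoly R') z = complex_of_real (t / (cmod (poly (cpoly H) z))\<^sup>2) * z ^ (k - m)"
    using z0 by (simp add: field_simps)
  then show ?thesis
    using assms(2) \<open>poly (cpoly H) z \<noteq> 0\<close> by (intro exI[of _ "t / (cmod (poly (cpoly H) z))\<^sup>2"]) auto
qed

lemma positive_palindrome_cancel:
  assumes pal: "positive_palindrome k R" and H: "degree H = m" and R: "R = H * rev_poly m H * R'"
  shows "m \<le> k \<and> positive_palindrome (k - m) R'"
proof -
  have R0: "poly R 0 \<noteq> 0" using pal by (simp add: positive_palindrome_def)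
  then have H0: "poly H 0 \<noteq> 0" and rH0: "poly (rev_poly m H) 0 \<noteq> 0" and R'0: "poly R' 0 \<noteq> 0"
    by (auto simp: R)
  have "coeff (rev_poly m H) m \<noteq> 0"
    using H0 by (simp add: coeff_rev_poly poly_0_coeff_0)
  then have drH: "degree (rev_poly m H) = m"
    using le_degree degree_rev_poly_le le_antisym by blast
  have nz: "H \<noteq> 0" "rev_poly m H \<noteq> 0" "R' \<noteq> 0" using H0 rH0 R'0 by auto
  have "degree R = m + m + degree R'"
    using nz by (simp add: R degree_mult_eq H drH)
  with degree_positive_palindrome[OF pal] have dR': "degree R' = 2 * (k - m)" and mk: "m \<le> k"
    by auto
  have "rev_poly (m + m + 2 * (k - m)) R = rev_poly (m + m) (H * rev_poly m H) * rev_poly (2 * (k - m)) R'"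
    unfolding R by (rule rev_poly_mult) (use dR' degree_mult_le[of H "rev_poly m H"] H drH in auto)
  also have "rev_poly (m + m) (H * rev_poly m H) = rev_poly m H * H"
    using H drH by (simp add: rev_poly_mult rev_poly_rev_poly)
  finally have "H * rev_poly m H * rev_poly (2 * (k - m)) R' = rev_poly (m + m + 2 * (k - m)) R"
    by (simp add: mult_ac)
  also have "m + m + 2 * (k - m) = 2 * k" using mk by simp
  also have "rev_poly (2 * k) R = H * rev_poly m H * R'"
    using pal by (simp add: positive_palindrome_def R)
  finally have self_rec: "rev_poly (2 * (k - m)) R' = R'" using nz by simp
  have "\<exists>t>0. poly (cpoly R') z = complex_of_real t * z ^ (k - m)" if "cmod z = 1" for z
  proof -
    obtain t where t: "t > 0" "poly (cpoly R) z = complex_of_real t * z ^ k"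
      using pal \<open>cmod z = 1\<close> by (auto simp: positive_palindrome_def)
    then show ?thesis
      using unit_circle_factor_cancel[OF \<open>cmod z = 1\<close> t(1) _ H mk] unfolding R by blast
  qed
  then show ?thesis using mk dR' self_rec R'0 by (auto simp: positive_palindrome_def)
qed

definition conj_pair_poly :: "complex \<Rightarrow> real poly" where
  "conj_pair_poly r = [:(cmod r)\<^sup>2, -2 * Re r, 1:]"

lemma poly_cpoly_conj_pair_poly: "poly (cpoly (conj_pair_poly r)) w = (w - r) * (w - cnj r)"
proof -
  have "complex_of_real ((cmod r)\<^sup>2) = r * cnj r" by (rule complex_norm_square)
  moreover have "complex_of_real (2 * Re r) = r + cnj r" by (simp add: complex_add_cnj)
  ultimately show ?thesis by (simp add: conj_pair_poly_def map_poly_pCons algebra_simps)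
qed

lemma conj_pair_poly_dvd:
  assumes "Im r \<noteq> 0" "poly (cpoly R) r = 0"
  shows "conj_pair_poly r dvd R"
proof -
  define q where "q = conj_pair_poly r"
  define m where "m = R mod q"
  have "cpoly R = cpoly (R div q * q + m)" by (simp add: m_def)
  also have "\<dots> = cpoly (R div q) * cpoly q + cpoly m" by (simp add: cpoly_add cpoly_mult)
  finally have "cpoly R = cpoly (R div q) * cpoly q + cpoly m" .
  then have "poly (cpoly m) r = 0"
    using assms by (simp add: q_def poly_cpoly_conj_pair_poly)
  moreover have "degree m \<le> 1"
    using degree_mod_less[of q R] by (auto simp: m_def q_def conj_pair_poly_def)
  ultimately have "complex_of_real (coeff m 0) + complex_of_real (coeff m 1) * r = 0"
    by (subst (asm) poly_altdef_le[of _ 1]) (auto simp: coeff_map_poly degree_map_poly)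
  then have "coeff m 1 = 0" "coeff m 0 = 0"
    using assms(1) by (auto simp: complex_eq_iff)
  have "m = 0"
  proof (rule poly_eqI)
    show "coeff m n = coeff 0 n" for n
      using \<open>coeff m 0 = 0\<close> \<open>coeff m 1 = 0\<close> \<open>degree m \<le> 1\<close> coeff_eq_0[of m n]
      by (cases "n \<le> 1") (auto simp: le_Suc_eq)
  qed
  then show ?thesis by (simp add: m_def q_def mod_eq_0_iff_dvd)
qed

lemma rev_poly_conj_pair_poly:
  assumes "r \<noteq> 0"
  shows "rev_poly 2 (conj_pair_poly r) = smult ((cmod r)\<^sup>2) (conj_pair_poly (inverse r))"
  by (rule poly_eqI)
     (auto simp: conj_pair_poly_def coeff_rev_poly coeff_pCons norm_inverse split: nat.splits,
      simp add: power_inverse assms, simp add: cmod_power2)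

lemma reciprocal_real_roots_factor:
  fixes R :: "real poly"
  assumes "\<rho> \<noteq> 0" "\<rho> * \<rho> \<noteq> 1" "poly R \<rho> = 0" "poly R (inverse \<rho>) = 0"
  shows "\<exists>R'. R = [:-\<rho>, 1:] * rev_poly 1 [:-\<rho>, 1:] * R'"
proof -
  obtain R1 where R1: "R = [:-\<rho>, 1:] * R1"
    using assms(3) by (auto simp: poly_eq_0_iff_dvd elim: dvdE)
  have "poly [:-\<rho>, 1:] (inverse \<rho>) \<noteq> 0"
    using assms(1,2) by (auto simp: field_simps)
  then have "poly R1 (inverse \<rho>) = 0" using assms(4) R1 by simp
  then obtain R2 where R2: "R1 = [:-inverse \<rho>, 1:] * R2"
    by (auto simp: poly_eq_0_iff_dvd elim: dvdE)
  have "[:-inverse \<rho>, 1:] = smult (- inverse \<rho>) (rev_poly 1 [:-\<rho>, 1:])"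
    unfolding rev_poly_linear using assms(1) by simp
  then have "R = [:-\<rho>, 1:] * (smult (- inverse \<rho>) (rev_poly 1 [:-\<rho>, 1:]) * R2)"
    by (simp only: R1 R2)
  also have "\<dots> = [:-\<rho>, 1:] * rev_poly 1 [:-\<rho>, 1:] * smult (- inverse \<rho>) R2"
    by (simp only: mult_smult_left mult_smult_right mult.assoc)
  finally show ?thesis ..
qed

lemma reciprocal_nonreal_roots_factor:
  fixes R :: "real poly"
  assumes "Im r \<noteq> 0" "cmod r \<noteq> 1" "poly (cpoly R) r = 0" "poly (cpoly R) (inverse r) = 0"
  shows "\<exists>R'. R = conj_pair_poly r * rev_poly 2 (conj_pair_poly r) * R'"
proof -
  have r0: "r \<noteq> 0" using assms(1) by auto
  obtain R1 where R1: "R = conj_pair_poly r * R1"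
    using conj_pair_poly_dvd[OF assms(1,3)] by (elim dvdE)
  have "inverse r \<noteq> r"
  proof
    assume "inverse r = r"
    then have "r * r = 1" using r0 by (metis right_inverse)
    then show False using assms(1) by (auto simp: square_eq_1_iff)
  qed
  moreover have "inverse r \<noteq> cnj r"
  proof
    assume "inverse r = cnj r"
    then have "r * cnj r = 1" using r0 by (metis right_inverse)
    then have "complex_of_real ((cmod r)\<^sup>2) = 1" by (metis complex_norm_square)
    then have "(cmod r)\<^sup>2 = 1" by (simp only: of_real_eq_1_iff)
    then show False using assms(2) norm_ge_zero[of r] by (auto simp: power2_eq_1_iff)
  qed
  ultimately have "poly (cpoly (conj_pair_poly r)) (inverse r) \<noteq> 0"
    by (simp add: poly_cpoly_conj_pair_poly)
  then have "poly (cpoly R1) (inverse r) = 0"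
    using assms(4) by (simp add: R1 cpoly_mult)
  moreover have "Im (inverse r) \<noteq> 0" using assms(1) by simp
  ultimately obtain R2 where R2: "R1 = conj_pair_poly (inverse r) * R2"
    using conj_pair_poly_dvd by (metis dvdE)
  have "R = conj_pair_poly r * rev_poly 2 (conj_pair_poly r) * smult (inverse ((cmod r)\<^sup>2)) R2"
    using r0 by (simp add: R1 R2 rev_poly_conj_pair_poly mult.assoc)
  then show ?thesis ..
qed

lemma positive_palindrome_split:
  assumes pal: "positive_palindrome k R" and "0 < k"
  shows "\<exists>H m R'. degree H = m \<and> 0 < m \<and> R = H * rev_poly m H * R'"
proof -
  have dR: "degree R = 2 * k" by (rule degree_positive_palindrome[OF pal])
  then have "\<not> constant (poly (cpoly R))"
    using \<open>0 < k\<close> by (simp add: constant_degree degree_map_poly)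
  then obtain r where r: "poly (cpoly R) r = 0"
    using fundamental_theorem_of_algebra by blast
  have r0: "r \<noteq> 0"
    using r pal poly_cpoly_of_real[of R 0] by (auto simp: positive_palindrome_def)
  have r1: "cmod r \<noteq> 1"
    using r r0 pal by (force simp: positive_palindrome_def)
  have "poly (cpoly R) r = r ^ (2 * k) * poly (cpoly R) (inverse r)"
    using pal r0 dR poly_cpoly_rev_poly[of R "2 * k" r] by (simp add: positive_palindrome_def)
  with r r0 have ri: "poly (cpoly R) (inverse r) = 0" by simp
  show ?thesis
  proof (cases "Im r = 0")
    case True
    then have rr: "r = complex_of_real (Re r)" by (simp add: complex_eq_iff)
    have "poly R (Re r) = 0" "poly R (inverse (Re r)) = 0"
      using r ri poly_cpoly_of_real[of R "Re r"] poly_cpoly_of_real[of R "inverse (Re r)"]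
      by (simp_all add: of_real_inverse flip: rr)
    moreover have "Re r \<noteq> 0" using r0 rr by auto
    moreover have "Re r * Re r \<noteq> 1"
      using r1 rr by (auto simp: square_eq_1_iff)
    ultimately obtain R' where "R = [:- Re r, 1:] * rev_poly 1 [:- Re r, 1:] * R'"
      using reciprocal_real_roots_factor by blast
    moreover have "degree [:- Re r, 1:] = 1" by simp
    ultimately show ?thesis by blast
  next
    case False
    obtain R' where "R = conj_pair_poly r * rev_poly 2 (conj_pair_poly r) * R'"
      using reciprocal_nonreal_roots_factor[OF False r1 r ri] by blast
    moreover have "degree (conj_pair_poly r) = 2" by (simp add: conj_pair_poly_def)
    ultimately show ?thesis using pos2 by blast
  qed
qed

theorem fejer_riesz:
  assumes "positive_palindrome k R"
  shows "\<exists>G. degree G \<le> k \<and> G * rev_poly k G = R"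
  using assms
proof (induction k arbitrary: R rule: less_induct)
  case (less k R)
  show ?case
  proof (cases "k = 0")
    case True
    then obtain a where R: "R = [:a:]"
      using degree_positive_palindrome[OF less.prems] degree_eq_zeroE by auto
    have "\<exists>t>0. poly (cpoly R) 1 = complex_of_real t"
      using less.prems True by (auto simp: positive_palindrome_def)
    then have "a > 0" by (auto simp: R map_poly_pCons)
    then have "[:sqrt a:] * rev_poly k [:sqrt a:] = R"
      using True by (simp add: R rev_poly_const)
    moreover have "degree [:sqrt a:] \<le> k" by simp
    ultimately show ?thesis by blast
  next
    case False
    then obtain H m R' where H: "degree H = m" "0 < m" and R: "R = H * rev_poly m H * R'"
      using positive_palindrome_split[OF less.prems] by blast
    with positive_palindrome_cancel[OF less.prems] have "m \<le> k" "positive_palindrome (k - m) R'"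
      by auto
    with less.IH[of "k - m"] H obtain G' where G': "degree G' \<le> k - m" "G' * rev_poly (k - m) G' = R'"
      by auto
    have "rev_poly (m + (k - m)) (H * G') = rev_poly m H * rev_poly (k - m) G'"
      by (rule rev_poly_mult) (use H G' in auto)
    then have "H * G' * rev_poly k (H * G') = R"
      using \<open>m \<le> k\<close> G' by (simp add: R mult_ac)
    moreover have "degree (H * G') \<le> k"
      using degree_mult_le[of H G'] H G' \<open>m \<le> k\<close> by linarith
    ultimately show ?thesis by blast
  qed
qed

section \<open>Complementary polynomials\<close>

definition complementary_pair :: "nat \<Rightarrow> real poly \<Rightarrow> real poly \<Rightarrow> bool" where
  "complementary_pair k A B \<longleftrightarrow>
     degree A \<le> k \<and> degree B \<le> k \<and> A * rev_poly k A + B * rev_poly k B = monom 1 k"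

(* Under z = e^(2i theta) one has e^(-i theta) cos_poly(z) = cos theta. *)
definition cos_poly :: "real poly" where
  "cos_poly = [:1/2, 1/2:]"

lemma poly_cos_poly: "poly cos_poly x = (1 + x) / 2"
  by (simp add: cos_poly_def)

lemma degree_cos_poly_power: "degree (cos_poly ^ n) \<le> n"
  using degree_power_le[of cos_poly n] by (simp add: cos_poly_def)

lemma rev_poly_cos_poly_power: "rev_poly n (cos_poly ^ n) = cos_poly ^ n"
proof (rule rev_poly_eqI[OF degree_cos_poly_power])
  fix x :: real assume "x \<noteq> 0"
  then have "x * ((1 + inverse x) / 2) = (1 + x) / 2" by (simp add: field_simps)
  then show "x ^ n * poly (cos_poly ^ n) (inverse x) = poly (cos_poly ^ n) x"
    by (simp add: poly_cos_poly power_mult_distrib[symmetric])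
qed

lemma cos_poly_power_product:
  "smult c (cos_poly ^ k) * rev_poly k (smult c (cos_poly ^ k)) = smult (c * c) (cos_poly ^ (2 * k))"
  by (simp add: rev_poly_smult rev_poly_cos_poly_power mult_2 power_add)

lemma poly_cpoly_cos_poly_power_circle:
  assumes "cmod z = 1"
  shows "poly (cpoly (cos_poly ^ (2 * k))) z = z ^ k * complex_of_real (((1 + Re z) / 2) ^ k)"
proof -
  have "z * cnj z = 1" using assms by (simp flip: complex_norm_square)
  have re: "complex_of_real (Re z) = (z + cnj z) / 2" by (simp add: complex_add_cnj)
  have "((1 + z) / 2)\<^sup>2 = (z + z * z / 2 + z * cnj z / 2) / 2"
    by (simp add: \<open>z * cnj z = 1\<close> power2_eq_square field_simps)
  also have "\<dots> = z * complex_of_real ((1 + Re z) / 2)"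
    by (simp add: re field_simps)
  finally have square: "((1 + z) / 2)\<^sup>2 = z * complex_of_real ((1 + Re z) / 2)" .
  have "poly (cpoly cos_poly) z = (1 + z) / 2"
    by (simp add: cos_poly_def map_poly_pCons field_simps)
  then have "poly (cpoly (cos_poly ^ (2 * k))) z = (((1 + z) / 2)\<^sup>2) ^ k"
    by (simp only: cpoly_power poly_power power_mult)
  also have "\<dots> = z ^ k * complex_of_real (((1 + Re z) / 2) ^ k)"
    by (simp only: square power_mult_distrib of_real_power)
  finally show ?thesis .
qed

lemma half_re_circle_bounds:
  assumes "cmod z = 1" shows "0 \<le> (1 + Re z) / 2" "(1 + Re z) / 2 \<le> 1"
  using abs_Re_le_cmod[of z] assms by auto

lemma positive_palindrome_gap:
  assumes "c * c < 1" "c \<noteq> 0"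
  shows "positive_palindrome k (monom 1 k - smult (c * c) (cos_poly ^ (2 * k)))"
    (is "positive_palindrome k ?R")
proof -
  have "degree ?R \<le> 2 * k"
    using degree_cos_poly_power[of "2 * k"]
    by (intro degree_diff_le) (auto simp: degree_monom_eq intro: order.trans[OF degree_smult_le])
  moreover have "rev_poly (2 * k) ?R = ?R"
    by (simp add: rev_poly_diff rev_poly_smult rev_poly_monom rev_poly_cos_poly_power)
  moreover have "poly ?R 0 \<noteq> 0"
    using assms by (cases "k = 0") (simp_all add: poly_monom cos_poly_def zero_power)
  moreover have "\<exists>t>0. poly (cpoly ?R) z = complex_of_real t * z ^ k" if z: "cmod z = 1" for z
  proof -
    define u where "u = (1 + Re z) / 2"
    have "0 \<le> u ^ k" "u ^ k \<le> 1"
      using half_re_circle_bounds[OF z] by (simp_all add: u_def power_le_one)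
    then have "c * c * u ^ k \<le> c * c" by (intro mult_left_le) simp_all
    with assms(1) have "c * c * u ^ k < 1" by linarith
    moreover have "poly (cpoly ?R) z = complex_of_real (1 - c * c * u ^ k) * z ^ k"
      using poly_cpoly_cos_poly_power_circle[OF z, of k]
      by (simp add: cpoly_diff cpoly_smult map_poly_monom poly_monom u_def algebra_simps)
    ultimately show ?thesis by (intro exI[of _ "1 - c * c * u ^ k"]) auto
  qed
  ultimately show ?thesis by (simp add: positive_palindrome_def)
qed

lemma complementary_pair_gap:
  assumes "c * c < 1" "c \<noteq> 0"
  shows "\<exists>B. complementary_pair k (smult c (cos_poly ^ k)) B"
proof -
  obtain G where G: "degree G \<le> k" "G * rev_poly k G = monom 1 k - smult (c * c) (cos_poly ^ (2 * k))"
    using fejer_riesz[OF positive_palindrome_gap[OF assms]] by blast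
  have "smult c (cos_poly ^ k) * rev_poly k (smult c (cos_poly ^ k)) + G * rev_poly k G = monom 1 k"
    by (simp only: G(2) cos_poly_power_product)
  moreover have "degree (smult c (cos_poly ^ k)) \<le> k"
    using degree_cos_poly_power[of k] by (simp add: degree_smult_le)
  ultimately show ?thesis
    using G(1) unfolding complementary_pair_def by blast
qed

lemma positive_palindrome_geometric:
  "positive_palindrome K (\<Sum>i\<le>K. cos_poly ^ (2 * (K - i)) * monom 1 i)" (is "positive_palindrome K ?S")
proof -
  have "degree (cos_poly ^ (2 * (K - i)) * monom 1 i) \<le> 2 * (K - i) + i" for i
    using degree_mult_le[of "cos_poly ^ (2 * (K - i))" "monom 1 i"] degree_cos_poly_power[of "2 * (K - i)"]
    by (simp add: degree_monom_eq)
  then have "degree ?S \<le> 2 * K"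
    by (intro degree_sum_le) (fastforce intro: order.trans)+
  moreover have "rev_poly (2 * K) ?S = ?S"
  proof -
    have "rev_poly (2 * K) (cos_poly ^ (2 * (K - i)) * monom 1 i) = cos_poly ^ (2 * (K - i)) * monom 1 i"
      if "i \<le> K" for i
    proof -
      have "rev_poly (2 * (K - i) + 2 * i) (cos_poly ^ (2 * (K - i)) * monom 1 i)
          = rev_poly (2 * (K - i)) (cos_poly ^ (2 * (K - i))) * rev_poly (2 * i) (monom 1 i)"
        by (rule rev_poly_mult) (simp_all add: degree_cos_poly_power degree_monom_eq)
      then show ?thesis
        using that by (simp add: rev_poly_cos_poly_power rev_poly_monom flip: add_mult_distrib2)
    qed
    then show ?thesis by (simp add: rev_poly_sum)
  qed
  moreover have "poly ?S 0 \<noteq> 0"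
    by (simp add: poly_sum poly_monom poly_cos_poly power_0_left if_distrib[of "\<lambda>x. _ * x"] sum.delta
        cong: if_cong)
  moreover have "\<exists>t>0. poly (cpoly ?S) z = complex_of_real t * z ^ K" if z: "cmod z = 1" for z
  proof -
    define u where "u = (1 + Re z) / 2"
    have "poly (cpoly (cos_poly ^ (2 * (K - i)) * monom 1 i)) z = complex_of_real (u ^ (K - i)) * z ^ K"
      if "i \<le> K" for i
      using that poly_cpoly_cos_poly_power_circle[OF z, of "K - i"]
      by (simp add: u_def cpoly_mult map_poly_monom poly_monom mult_ac flip: power_add)
    then have "poly (cpoly ?S) z = complex_of_real (\<Sum>i\<le>K. u ^ (K - i)) * z ^ K"
      by (simp add: cpoly_sum poly_sum sum_distrib_right)
    moreover have "1 \<le> (\<Sum>i\<le>K. u ^ (K - i))"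
      using member_le_sum[of K "{..K}" "\<lambda>i. u ^ (K - i)"] half_re_circle_bounds[OF z]
      by (simp add: u_def)
    ultimately show ?thesis by (intro exI[of _ "\<Sum>i\<le>K. u ^ (K - i)"]) auto
  qed
  ultimately show ?thesis by (simp add: positive_palindrome_def)
qed

lemma monom_minus_cos_poly_power:
  "monom 1 (Suc K) - cos_poly ^ (2 * Suc K)
     = [:1/2, -1/2:] * [:-1/2, 1/2:] * (\<Sum>i\<le>K. cos_poly ^ (2 * (K - i)) * monom 1 i)"
proof -
  have "monom 1 (Suc K) - cos_poly ^ (2 * Suc K) = monom 1 1 ^ Suc K - (cos_poly ^ 2) ^ Suc K"
    by (simp only: monom_power power_mult) simp
  also have "\<dots> = (monom 1 1 - cos_poly ^ 2) * (\<Sum>i<Suc K. monom 1 1 ^ i * (cos_poly ^ 2) ^ (K - i))"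
    by (rule diff_power_eq_sum)
  also have "monom 1 1 - cos_poly ^ 2 = [:1/2, -1/2:] * [:-1/2, 1/2:]"
    by (simp add: cos_poly_def monom_Suc power2_eq_square one_pCons)
  also have "(\<Sum>i<Suc K. monom 1 1 ^ i * (cos_poly ^ 2) ^ (K - i))
      = (\<Sum>i\<le>K. cos_poly ^ (2 * (K - i)) * monom 1 i)"
    by (simp add: monom_power lessThan_Suc_atMost mult.commute flip: power_mult)
  finally show ?thesis .
qed

lemma complementary_pair_unit:
  assumes "c * c = 1"
  shows "\<exists>B. complementary_pair k (smult c (cos_poly ^ k)) B"
proof (cases k)
  case 0
  then show ?thesis
    using assms by (intro exI[of _ 0]) (simp add: complementary_pair_def rev_poly_const one_pCons)
next
  case (Suc K)
  obtain G where G: "degree G \<le> K" "G * rev_poly K G = (\<Sum>i\<le>K. cos_poly ^ (2 * (K - i)) * monom 1 i)"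
    using fejer_riesz[OF positive_palindrome_geometric] by blast
  define B where "B = [:1/2, -1/2:] * G"
  have "degree B \<le> k"
    using degree_mult_le[of "[:1/2, -1/2:]" G] G(1) Suc by (simp add: B_def)
  have "rev_poly (1 + K) B = rev_poly 1 [:1/2, -1/2:] * rev_poly K G"
    unfolding B_def by (rule rev_poly_mult) (use G in auto)
  then have "rev_poly k B = rev_poly 1 [:1/2, -1/2:] * rev_poly K G"
    using Suc by simp
  also have "rev_poly 1 [:1/2, -1/2:] = [:-1/2, 1/2:]" by (rule rev_poly_linear)
  finally have "B * rev_poly k B = [:1/2, -1/2:] * [:-1/2, 1/2:] * (G * rev_poly K G)"
    by (simp only: B_def mult_ac)
  also have "\<dots> = monom 1 k - cos_poly ^ (2 * k)"
    unfolding Suc G(2) monom_minus_cos_poly_power ..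
  also have "\<dots> = monom 1 k - smult (c * c) (cos_poly ^ (2 * k))"
    using assms by simp
  finally have "smult c (cos_poly ^ k) * rev_poly k (smult c (cos_poly ^ k)) + B * rev_poly k B = monom 1 k"
    by (simp only: cos_poly_power_product)
  moreover have "degree (smult c (cos_poly ^ k)) \<le> k"
    using degree_cos_poly_power[of k] by (simp add: degree_smult_le)
  ultimately show ?thesis
    using \<open>degree B \<le> k\<close> unfolding complementary_pair_def by blast
qed

lemma complementary_pair_exists:
  assumes "\<bar>c\<bar> \<le> 1"
  shows "\<exists>B. complementary_pair k (smult c (cos_poly ^ k)) B"
proof -
  consider "c = 0" | "c * c < 1" "c \<noteq> 0" | "c * c = 1"
    using assms abs_le_square_iff[of c 1] by (fastforce simp: power2_eq_square)
  then show ?thesis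
  proof cases
    case 1
    then show ?thesis
      using rev_poly_monom[of 0 k "1::real"] by (intro exI[of _ 1]) (simp add: complementary_pair_def)
  qed (use complementary_pair_gap complementary_pair_unit in blast)+
qed

section \<open>Quantum signal processing\<close>

definition laurent_eval :: "nat \<Rightarrow> real poly \<Rightarrow> real \<Rightarrow> complex" where
  "laurent_eval k A \<theta> = cis (- (real k * \<theta>)) * poly (cpoly A) (cis (2 * \<theta>))"

(* The state ((L A + i L B)|0> + (L A - i L B)|1>)/sqrt 2 with L = laurent_eval k _ theta: it is |+>
   for (k, A, B) = (0, 1, 0), and its <+|-amplitude is L A. *)
definition qsp_vec :: "nat \<Rightarrow> real poly \<Rightarrow> real poly \<Rightarrow> real \<Rightarrow> bool \<Rightarrow> complex" where
  "qsp_vec k A B \<theta> =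
     (\<lambda>r. (laurent_eval k A \<theta> + (if r then - \<i> else \<i>) * laurent_eval k B \<theta>) / complex_of_real (sqrt 2))"

definition mat_vec :: "(bool \<Rightarrow> bool \<Rightarrow> complex) \<Rightarrow> (bool \<Rightarrow> complex) \<Rightarrow> bool \<Rightarrow> complex" where
  "mat_vec M v = (\<lambda>r. \<Sum>u\<in>UNIV. M r u * v u)"

definition qsp_run :: "real \<Rightarrow> real \<Rightarrow> real list \<Rightarrow> (bool \<Rightarrow> complex) \<Rightarrow> bool \<Rightarrow> complex" where
  "qsp_run y \<phi>\<^sub>0 \<phi>s v = fold (\<lambda>\<phi> w. mat_vec (rotmat AZ \<phi>) (mat_vec (smat y) w)) \<phi>s (mat_vec (rotmat AZ \<phi>\<^sub>0) v)"

definition plus_vec :: "bool \<Rightarrow> complex" where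
  "plus_vec = (\<lambda>_. complex_of_real (1 / sqrt 2))"

definition plus_amp :: "(bool \<Rightarrow> complex) \<Rightarrow> complex" where
  "plus_amp v = cnj (plus_vec False) * v False + cnj (plus_vec True) * v True"

lemma mat_vec_expand: "mat_vec M v = (\<lambda>r. M r False * v False + M r True * v True)"
  by (simp add: mat_vec_def UNIV_bool add.commute)

lemma laurent_eval_add_smult:
  "laurent_eval k (smult a A + smult b B) \<theta> =
     complex_of_real a * laurent_eval k A \<theta> + complex_of_real b * laurent_eval k B \<theta>"
  by (simp add: laurent_eval_def cpoly_add cpoly_smult algebra_simps)

lemma cis_conv_cos_sin: "cis x = complex_of_real (cos x) + \<i> * complex_of_real (sin x)"
  by (simp add: complex_eq_iff)

lemma rotmat_AZ_entries:
  "rotmat AZ \<phi> False False = cis (- (\<phi> / 2))" "rotmat AZ \<phi> False True = 0"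
  "rotmat AZ \<phi> True False = 0" "rotmat AZ \<phi> True True = cis (\<phi> / 2)"
proof -
  have "\<i> * complex_of_real \<phi> / 2 = \<i> * complex_of_real (\<phi> / 2)" by simp
  then show "rotmat AZ \<phi> False False = cis (- (\<phi> / 2))" "rotmat AZ \<phi> True True = cis (\<phi> / 2)"
    by (simp_all add: rotmat_def cis_conv_exp)
qed (simp_all add: rotmat_def)

lemma mat_vec_rotZ_qsp_vec:
  "mat_vec (rotmat AZ \<phi>) (qsp_vec k A B \<theta>) =
     qsp_vec k (smult (cos (\<phi> / 2)) A + smult (sin (\<phi> / 2)) B)
               (smult (- sin (\<phi> / 2)) A + smult (cos (\<phi> / 2)) B) \<theta>"
proof
  fix r
  have rot: "cis (- x) * ((a + \<i> * b) / r2) =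
        ((complex_of_real (cos x) * a + complex_of_real (sin x) * b)
          + \<i> * (complex_of_real (- sin x) * a + complex_of_real (cos x) * b)) / r2"
    "cis x * ((a + (- \<i>) * b) / r2) =
        ((complex_of_real (cos x) * a + complex_of_real (sin x) * b)
          + (- \<i>) * (complex_of_real (- sin x) * a + complex_of_real (cos x) * b)) / r2"
    for x :: real and a b r2 :: complex
    by (simp_all add: cis_conv_cos_sin add_divide_distrib[symmetric] ring_distribs)
       (simp_all add: algebra_simps)
  show "mat_vec (rotmat AZ \<phi>) (qsp_vec k A B \<theta>) r = qsp_vec k (smult (cos (\<phi> / 2)) A + smult (sin (\<phi> / 2)) B)
      (smult (- sin (\<phi> / 2)) A + smult (cos (\<phi> / 2)) B) \<theta> r"
    unfolding qsp_vec_def laurent_eval_add_smult mat_vec_expand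
    by (cases r) (simp_all only: rotmat_AZ_entries if_True if_False mult_zero_left add_0_right add_0_left rot)
qed

lemma mat_vec_enc_qsp_vec:
  assumes "0 \<le> sin \<theta>"
  shows "mat_vec (smat (cos \<theta>)) (qsp_vec k A B \<theta>) = qsp_vec (Suc k) (pCons 0 A) B \<theta>"
proof
  fix r
  have "sqrt (1 - (cos \<theta>)\<^sup>2) = sin \<theta>"
    using assms by (simp add: sin_squared_eq[symmetric])
  then have entries: "smat (cos \<theta>) False False = complex_of_real (cos \<theta>)"
      "smat (cos \<theta>) True True = complex_of_real (cos \<theta>)"
      "smat (cos \<theta>) False True = \<i> * complex_of_real (sin \<theta>)"
      "smat (cos \<theta>) True False = \<i> * complex_of_real (sin \<theta>)"
    by (simp_all add: smat_def)
  have enc: "complex_of_real (cos t) * ((a + \<i> * b) / r2) + \<i> * complex_of_real (sin t) * ((a + (- \<i>) * b) / r2)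
        = (cis t * a + \<i> * (cis (- t) * b)) / r2"
    "\<i> * complex_of_real (sin t) * ((a + \<i> * b) / r2) + complex_of_real (cos t) * ((a + (- \<i>) * b) / r2)
        = (cis t * a + (- \<i>) * (cis (- t) * b)) / r2"
    for t :: real and a b r2 :: complex
    by (simp_all add: cis_conv_cos_sin add_divide_distrib[symmetric] ring_distribs)
  have shift: "cis (- (real (Suc k) * \<theta>)) * cis (2 * \<theta>) = cis \<theta> * cis (- (real k * \<theta>))"
    by (simp add: cis_mult algebra_simps)
  have "laurent_eval (Suc k) (pCons 0 A) \<theta> = cis \<theta> * laurent_eval k A \<theta>"
    unfolding laurent_eval_def by (simp add: map_poly_pCons mult.assoc flip: shift)
  moreover have "cis (- (real (Suc k) * \<theta>)) = cis (- \<theta>) * cis (- (real k * \<theta>))"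
    by (simp add: cis_mult algebra_simps)
  then have "laurent_eval (Suc k) B \<theta> = cis (- \<theta>) * laurent_eval k B \<theta>"
    unfolding laurent_eval_def by (simp only: mult.assoc)
  ultimately show "mat_vec (smat (cos \<theta>)) (qsp_vec k A B \<theta>) r = qsp_vec (Suc k) (pCons 0 A) B \<theta> r"
    unfolding qsp_vec_def mat_vec_expand
    by (cases r) (simp_all only: entries if_True if_False enc)
qed

lemma rotation_zeroing_ends:
  fixes a\<^sub>0 b\<^sub>0 a b :: real
  assumes "a * a\<^sub>0 + b * b\<^sub>0 = 0"
  shows "\<exists>c s. c * c + s * s = 1 \<and> c * a\<^sub>0 - s * b\<^sub>0 = 0 \<and> s * a + c * b = 0"
proof -
  have unit: "(x / sqrt (x * x + y * y)) * (x / sqrt (x * x + y * y))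
      + (y / sqrt (x * x + y * y)) * (y / sqrt (x * x + y * y)) = 1"
    if "x \<noteq> 0 \<or> y \<noteq> 0" for x y :: real
  proof -
    have "0 < x * x + y * y" using that by (simp add: sum_squares_gt_zero_iff)
    then show ?thesis
      using that by (simp add: power_divide flip: power2_eq_square add_divide_distrib)
  qed
  show ?thesis
  proof (cases "a = 0 \<and> b = 0")
    case False
    with unit[of a b] assms show ?thesis
      by (intro exI[of _ "a / sqrt (a * a + b * b)"] exI[of _ "- b / sqrt (a * a + b * b)"])
         (auto simp: field_simps)
  next
    case ab: True
    show ?thesis
    proof (cases "a\<^sub>0 = 0 \<and> b\<^sub>0 = 0")
      case False
      with unit[of b\<^sub>0 a\<^sub>0] ab show ?thesis
        by (intro exI[of _ "b\<^sub>0 / sqrt (b\<^sub>0 * b\<^sub>0 + a\<^sub>0 * a\<^sub>0)"] exI[of _ "a\<^sub>0 / sqrt (b\<^sub>0 * b\<^sub>0 + a\<^sub>0 * a\<^sub>0)"])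
           (auto simp: field_simps)
    qed (use ab in \<open>auto intro: exI[of _ 1] exI[of _ 0]\<close>)
  qed
qed

lemma complementary_pair_0:
  assumes "complementary_pair 0 A B"
  obtains t where "A = [:cos t:]" "B = [:- sin t:]"
proof -
  have "degree A = 0" "degree B = 0" using assms by (auto simp: complementary_pair_def)
  then obtain a b where ab: "A = [:a:]" "B = [:b:]" by (meson degree_eq_zeroE)
  then have "a\<^sup>2 + (- b)\<^sup>2 = 1"
    using assms by (simp add: complementary_pair_def rev_poly_const power2_eq_square one_pCons)
  then obtain t where "a = cos t" "- b = sin t" by (rule sincos_total_2pi) auto
  with ab show ?thesis by (intro that[of t]) auto
qed

lemma complementary_pair_top_coeff:
  assumes "complementary_pair (Suc k) A B"
  shows "coeff A (Suc k) * coeff A 0 + coeff B (Suc k) * coeff B 0 = 0"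
proof -
  have dA: "degree A \<le> Suc k" and dB: "degree B \<le> Suc k"
    and id: "A * rev_poly (Suc k) A + B * rev_poly (Suc k) B = monom 1 (Suc k)"
    using assms by (auto simp: complementary_pair_def)
  have "coeff (A * rev_poly (Suc k) A + B * rev_poly (Suc k) B) (Suc k + Suc k) = 0"
    by (simp add: id)
  then show ?thesis
    by (simp only: coeff_add coeff_mult_at_degree_bounds[OF dA degree_rev_poly_le]
        coeff_mult_at_degree_bounds[OF dB degree_rev_poly_le]) (simp add: coeff_rev_poly)
qed

lemma complementary_pair_rotate:
  assumes "complementary_pair k A B" "c * c + s * s = 1"
  shows "complementary_pair k (smult c A - smult s B) (smult s A + smult c B)"
proof -
  have "(smult c A - smult s B) * rev_poly k (smult c A - smult s B)
        + (smult s A + smult c B) * rev_poly k (smult s A + smult c B)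
      = smult (c * c + s * s) (A * rev_poly k A + B * rev_poly k B)"
    by (simp add: rev_poly_diff rev_poly_add rev_poly_smult algebra_simps smult_add_left smult_add_right)
  moreover have "degree (smult c A - smult s B) \<le> k" "degree (smult s A + smult c B) \<le> k"
    using assms(1) unfolding complementary_pair_def
    by (intro degree_diff_le degree_add_le; auto intro: order.trans[OF degree_smult_le])+
  ultimately show ?thesis using assms by (simp add: complementary_pair_def)
qed

lemma rotation_inverse:
  fixes A B :: "real poly"
  assumes "c * c + s * s = 1"
  shows "smult c (smult c A - smult s B) + smult s (smult s A + smult c B) = A"
    and "smult (- s) (smult c A - smult s B) + smult c (smult s A + smult c B) = B"
proof -
  have "c * (c * a - s * b) + s * (s * a + c * b) = (c * c + s * s) * a"
    "- s * (c * a - s * b) + c * (s * a + c * b) = (c * c + s * s) * b" for a b :: real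
    by (simp_all add: algebra_simps)
  then show "smult c (smult c A - smult s B) + smult s (smult s A + smult c B) = A"
    and "smult (- s) (smult c A - smult s B) + smult c (smult s A + smult c B) = B"
    using assms by (auto intro!: poly_eqI)
qed

lemma complementary_pair_pCons_0:
  assumes "complementary_pair (Suc k) (pCons 0 A) B" "degree B \<le> k"
  shows "complementary_pair k A B"
proof -
  have "pCons 0 (A * rev_poly k A + B * rev_poly k B) = pCons 0 (monom 1 k)"
    using assms by (simp add: complementary_pair_def rev_poly_pCons_0 rev_poly_Suc monom_Suc)
  moreover have "degree A \<le> k"
    using assms(1) by (cases "A = 0") (auto simp: complementary_pair_def)
  ultimately show ?thesis using assms(2) by (simp add: complementary_pair_def)
qed

lemma complementary_pair_Suc_peel:
  assumes "complementary_pair (Suc k) A B"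
  obtains t A' B' where "complementary_pair k A' B'"
    "A = smult (cos t) (pCons 0 A') + smult (sin t) B'"
    "B = smult (- sin t) (pCons 0 A') + smult (cos t) B'"
proof -
  obtain c s where cs: "c * c + s * s = 1" "c * coeff A 0 - s * coeff B 0 = 0"
      "s * coeff A (Suc k) + c * coeff B (Suc k) = 0"
    using rotation_zeroing_ends[OF complementary_pair_top_coeff[OF assms]] by blast
  then obtain t where t: "c = cos t" "s = sin t"
    using sincos_total_2pi[of c s] by (auto simp: power2_eq_square)
  define A\<^sub>1 where "A\<^sub>1 = smult c A - smult s B"
  define B' where "B' = smult s A + smult c B"
  have pair: "complementary_pair (Suc k) A\<^sub>1 B'"
    unfolding A\<^sub>1_def B'_def using assms cs(1) by (rule complementary_pair_rotate)
  have "coeff A\<^sub>1 0 = 0" using cs by (simp add: A\<^sub>1_def)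
  then obtain A' where A': "A\<^sub>1 = pCons 0 A'" by (metis pCons_cases coeff_pCons_0)
  have "coeff B' (Suc k) = 0" using cs by (simp add: B'_def)
  with pair have "degree B' \<le> k"
    unfolding complementary_pair_def by (intro degree_le) (metis Suc_lessI coeff_eq_0 le_less_trans)
  with pair have "complementary_pair k A' B'"
    unfolding A' by (rule complementary_pair_pCons_0)
  moreover have "A = smult c A\<^sub>1 + smult s B'" "B = smult (- s) A\<^sub>1 + smult c B'"
    using rotation_inverse[OF cs(1)] by (simp_all add: A\<^sub>1_def B'_def)
  ultimately show ?thesis using that A' t by blast
qed

lemma qsp_run_Nil: "qsp_run y \<phi>\<^sub>0 [] v = mat_vec (rotmat AZ \<phi>\<^sub>0) v"
  by (simp add: qsp_run_def)

lemma qsp_run_snoc: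
  "qsp_run y \<phi>\<^sub>0 (\<phi>s @ [\<phi>]) v = mat_vec (rotmat AZ \<phi>) (mat_vec (smat y) (qsp_run y \<phi>\<^sub>0 \<phi>s v))"
  by (simp add: qsp_run_def)

theorem qsp_realizes_complementary_pair:
  assumes "complementary_pair k A B"
  shows "\<exists>\<phi>\<^sub>0 \<phi>s. length \<phi>s = k \<and>
           (\<forall>\<theta>. 0 \<le> sin \<theta> \<longrightarrow> qsp_run (cos \<theta>) \<phi>\<^sub>0 \<phi>s plus_vec = qsp_vec k A B \<theta>)"
  using assms
proof (induction k arbitrary: A B)
  case 0
  then obtain t where t: "A = [:cos t:]" "B = [:- sin t:]" by (rule complementary_pair_0)
  have plus: "plus_vec = qsp_vec 0 1 0 \<theta>" for \<theta>
    by (auto simp: plus_vec_def qsp_vec_def laurent_eval_def)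
  have "qsp_run (cos \<theta>) (2 * t) [] plus_vec = qsp_vec 0 A B \<theta>" for \<theta>
    unfolding qsp_run_Nil plus[of \<theta>] mat_vec_rotZ_qsp_vec by (simp add: t one_pCons)
  then show ?case by blast
next
  case (Suc k)
  obtain t A' B' where pair: "complementary_pair k A' B'"
    and A: "A = smult (cos t) (pCons 0 A') + smult (sin t) B'"
    and B: "B = smult (- sin t) (pCons 0 A') + smult (cos t) B'"
    using Suc.prems by (rule complementary_pair_Suc_peel)
  obtain \<phi>\<^sub>0 \<phi>s where "length \<phi>s = k"
    and IH: "\<And>\<theta>. 0 \<le> sin \<theta> \<Longrightarrow> qsp_run (cos \<theta>) \<phi>\<^sub>0 \<phi>s plus_vec = qsp_vec k A' B' \<theta>"
    using Suc.IH[OF pair] by blast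
  have "qsp_run (cos \<theta>) \<phi>\<^sub>0 (\<phi>s @ [2 * t]) plus_vec = qsp_vec (Suc k) A B \<theta>" if "0 \<le> sin \<theta>" for \<theta>
    using that by (simp add: qsp_run_snoc IH mat_vec_enc_qsp_vec mat_vec_rotZ_qsp_vec A B)
  with \<open>length \<phi>s = k\<close> show ?case by (intro exI[of _ \<phi>\<^sub>0] exI[of _ "\<phi>s @ [2 * t]"]) auto
qed

lemma plus_amp_qsp_vec: "plus_amp (qsp_vec k A B \<theta>) = laurent_eval k A \<theta>"
proof -
  have "complex_of_real (sqrt 2) * complex_of_real (sqrt 2) = 2"
    by (simp flip: of_real_mult)
  then show ?thesis
    by (simp add: plus_amp_def plus_vec_def qsp_vec_def field_simps)
qed

lemma laurent_eval_cos_poly_power: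
  "laurent_eval k (smult c (cos_poly ^ k)) \<theta> = complex_of_real (c * (cos \<theta>) ^ k)"
proof -
  have "cis (- \<theta>) * cis (2 * \<theta>) = cis \<theta>" by (simp add: cis_mult)
  then have "cis (- \<theta>) * poly (cpoly cos_poly) (cis (2 * \<theta>)) = (cis (- \<theta>) + cis \<theta>) / 2"
    by (simp add: cos_poly_def map_poly_pCons field_simps)
  also have "\<dots> = complex_of_real (cos \<theta>)" by (simp add: cis_conv_cos_sin)
  finally have cos: "cis (- \<theta>) * poly (cpoly cos_poly) (cis (2 * \<theta>)) = complex_of_real (cos \<theta>)" .
  have "cis (- (real k * \<theta>)) = cis (- \<theta>) ^ k"
    by (simp only: Complex.DeMoivre mult_minus_right)
  then have "laurent_eval k (smult c (cos_poly ^ k)) \<theta>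
      = complex_of_real c * (cis (- \<theta>) * poly (cpoly cos_poly) (cis (2 * \<theta>))) ^ k"
    by (simp add: laurent_eval_def cpoly_smult cpoly_power power_mult_distrib mult_ac)
  then show ?thesis by (simp add: cos)
qed

theorem qsp_monomial:
  assumes "\<bar>c\<bar> \<le> 1"
  shows "\<exists>\<phi>\<^sub>0 \<phi>s. length \<phi>s = k \<and>
           (\<forall>y. \<bar>y\<bar> \<le> 1 \<longrightarrow> plus_amp (qsp_run y \<phi>\<^sub>0 \<phi>s plus_vec) = complex_of_real (c * y ^ k))"
proof -
  obtain B where "complementary_pair k (smult c (cos_poly ^ k)) B"
    using complementary_pair_exists[OF assms] by blast
  then obtain \<phi>\<^sub>0 \<phi>s where "length \<phi>s = k" and run:
    "\<And>\<theta>. 0 \<le> sin \<theta> \<Longrightarrow> qsp_run (cos \<theta>) \<phi>\<^sub>0 \<phi>s plus_vec = qsp_vec k (smult c (cos_poly ^ k)) B \<theta>"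
    using qsp_realizes_complementary_pair by blast
  have "plus_amp (qsp_run y \<phi>\<^sub>0 \<phi>s plus_vec) = complex_of_real (c * y ^ k)" if "\<bar>y\<bar> \<le> 1" for y
  proof -
    have "0 \<le> sin (arccos y)" and y: "cos (arccos y) = y"
      using that by (simp_all add: sin_arccos_abs cos_arccos_abs abs_square_le_1)
    then show ?thesis
      using run[of "arccos y"] by (simp add: plus_amp_qsp_vec laurent_eval_cos_poly_power)
  qed
  with \<open>length \<phi>s = k\<close> show ?thesis by blast
qed

section \<open>Product-state circuits\<close>

definition product_state :: "nat \<Rightarrow> (nat \<Rightarrow> bool \<Rightarrow> complex) \<Rightarrow> state" where
  "product_state n h = (\<lambda>b. \<Prod>j<n. h j (b j))"

lemma apply1_product_state:
  assumes "q < n"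
  shows "apply1 M q (product_state n h) = product_state n (h(q := mat_vec M (h q)))"
proof
  fix b :: "nat \<Rightarrow> bool"
  define F where "F = (\<Prod>j\<in>{..<n} - {q}. h j (b j))"
  have q: "q \<in> {..<n}" using assms by simp
  have "product_state n h (b(q := v)) = h q v * F" for v
    unfolding product_state_def F_def by (subst prod.remove[OF _ q]) (auto intro!: prod.cong)
  then have "apply1 M q (product_state n h) b = (\<Sum>v\<in>UNIV. M (b q) v * h q v) * F"
    by (simp add: apply1_def sum_distrib_left mult_ac)
  also have "\<dots> = product_state n (h(q := mat_vec M (h q))) b"
    unfolding product_state_def F_def mat_vec_def by (subst prod.remove[OF _ q]) (auto intro!: prod.cong)
  finally show "apply1 M q (product_state n h) b = product_state n (h(q := mat_vec M (h q))) b" .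
qed

lemma circ_sem_Nil: "circ_sem y [] \<psi> = \<psi>"
  by (simp add: circ_sem_def)

lemma circ_sem_Cons: "circ_sem y (g # gs) \<psi> = circ_sem y gs (gate_sem y g \<psi>)"
  by (simp add: circ_sem_def)

lemma circ_sem_append: "circ_sem y (gs @ hs) \<psi> = circ_sem y hs (circ_sem y gs \<psi>)"
  by (simp add: circ_sem_def)

definition qsp_gates :: "nat \<Rightarrow> nat \<Rightarrow> real \<Rightarrow> real list \<Rightarrow> gate list" where
  "qsp_gates q i \<phi>\<^sub>0 \<phi>s = Rot AZ q [] \<phi>\<^sub>0 # concat (map (\<lambda>\<phi>. [Enc q i, Rot AZ q [] \<phi>]) \<phi>s)"

lemma qsp_gates_snoc:
  "qsp_gates q i \<phi>\<^sub>0 (\<phi>s @ [\<phi>]) = qsp_gates q i \<phi>\<^sub>0 \<phi>s @ [Enc q i, Rot AZ q [] \<phi>]"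
  by (simp add: qsp_gates_def)

lemma circ_sem_qsp_gates:
  assumes "q < n"
  shows "circ_sem y (qsp_gates q i \<phi>\<^sub>0 \<phi>s) (product_state n h)
       = product_state n (h(q := qsp_run (y i) \<phi>\<^sub>0 \<phi>s (h q)))"
proof (induction \<phi>s rule: rev_induct)
  case Nil
  show ?case
    by (simp add: qsp_gates_def circ_sem_Cons circ_sem_Nil apply1_product_state[OF assms] qsp_run_Nil
        fun_upd_def)
next
  case (snoc \<phi> \<phi>s)
  then show ?case
    by (simp add: qsp_gates_snoc circ_sem_append circ_sem_Cons circ_sem_Nil apply1_product_state[OF assms]
        qsp_run_snoc fun_upd_def cong: if_cong)
qed

definition qsp_layer :: "nat \<Rightarrow> (nat \<Rightarrow> real) \<Rightarrow> (nat \<Rightarrow> real list) \<Rightarrow> nat \<Rightarrow> gate list" where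
  "qsp_layer D \<phi>\<^sub>0 \<phi>s d = concat (map (\<lambda>i. qsp_gates (D + i) i (\<phi>\<^sub>0 i) (\<phi>s i)) [0..<d])"

lemma qsp_layer_0: "qsp_layer D \<phi>\<^sub>0 \<phi>s 0 = []"
  by (simp add: qsp_layer_def)

lemma qsp_layer_Suc:
  "qsp_layer D \<phi>\<^sub>0 \<phi>s (Suc d) = qsp_layer D \<phi>\<^sub>0 \<phi>s d @ qsp_gates (D + d) d (\<phi>\<^sub>0 d) (\<phi>s d)"
  by (simp add: qsp_layer_def)

lemma circ_sem_qsp_layer:
  assumes "D + d \<le> n"
  shows "circ_sem y (qsp_layer D \<phi>\<^sub>0 \<phi>s d) (product_state n h) = product_state n
           (\<lambda>j. if D \<le> j \<and> j < D + d then qsp_run (y (j - D)) (\<phi>\<^sub>0 (j - D)) (\<phi>s (j - D)) (h j) else h j)"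
  using assms
proof (induction d)
  case 0
  have "(\<lambda>j. if D \<le> j \<and> j < D + 0 then qsp_run (y (j - D)) (\<phi>\<^sub>0 (j - D)) (\<phi>s (j - D)) (h j) else h j) = h"
    by (rule ext) auto
  then show ?case by (simp add: qsp_layer_0 circ_sem_Nil)
next
  case (Suc d)
  then show ?case
    by (simp add: qsp_layer_Suc circ_sem_append circ_sem_qsp_gates)
       (rule arg_cong[where f = "product_state n"], auto)
qed

lemma gate_in_qsp_layer:
  assumes "g \<in> set (qsp_layer D \<phi>\<^sub>0 \<phi>s d)"
  obtains i where "i < d" "g = Enc (D + i) i" | i \<phi> where "i < d" "g = Rot AZ (D + i) [] \<phi>"
  using assms by (auto simp: qsp_layer_def qsp_gates_def split: if_splits)

lemma num_params_qsp_layer: "num_params (qsp_layer D \<phi>\<^sub>0 \<phi>s d) = (\<Sum>i<d. 1 + length (\<phi>s i))"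
proof -
  have "length (filter is_param (qsp_gates q i \<phi>\<^sub>0' \<phi>s')) = 1 + length \<phi>s'" for q i \<phi>\<^sub>0' \<phi>s'
    by (induction \<phi>s') (auto simp: qsp_gates_def)
  then show ?thesis by (induction d) (auto simp: num_params_def qsp_layer_0 qsp_layer_Suc)
qed

lemma count_qubit_qsp_layer:
  "length (filter (\<lambda>g. gate_qubits g = {q}) (qsp_layer D \<phi>\<^sub>0 \<phi>s d))
     = (if D \<le> q \<and> q < D + d then 1 + 2 * length (\<phi>s (q - D)) else 0)"
proof -
  have "length (filter (\<lambda>g. gate_qubits g = {q}) (qsp_gates p i \<phi>\<^sub>0' \<phi>s'))
      = (if p = q then 1 + 2 * length \<phi>s' else 0)" for p i \<phi>\<^sub>0' \<phi>s'
    by (induction \<phi>s') (auto simp: qsp_gates_def)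
  then show ?thesis by (induction d) (auto simp: qsp_layer_0 qsp_layer_Suc)
qed

lemma fold_depth_step_single_qubit:
  assumes "\<forall>g\<in>set gs. \<exists>p. gate_qubits g = {p}"
  shows "fold depth_step gs lvl q = lvl q + length (filter (\<lambda>g. gate_qubits g = {q}) gs)"
  using assms by (induction gs arbitrary: lvl) (auto simp: depth_step_def)

lemma circ_depth_qsp_layer:
  assumes "\<And>i. i < d \<Longrightarrow> length (\<phi>s i) \<le> s"
  shows "circ_depth n (qsp_layer D \<phi>\<^sub>0 \<phi>s d) \<le> 2 * s + 1"
proof -
  have "\<forall>g\<in>set (qsp_layer D \<phi>\<^sub>0 \<phi>s d). \<exists>p. gate_qubits g = {p}"
    by (auto elim: gate_in_qsp_layer)
  then have "fold depth_step (qsp_layer D \<phi>\<^sub>0 \<phi>s d) (\<lambda>_. 0) q \<le> 2 * s + 1" for q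
    using assms[of "q - D"] by (auto simp: fold_depth_step_single_qubit count_qubit_qsp_layer)
  then show ?thesis by (simp add: circ_depth_def)
qed

lemma basis_Suc: "basis (Suc n) = basis n \<union> (\<lambda>b. b(n := True)) ` basis n"
proof
  show "basis (Suc n) \<subseteq> basis n \<union> (\<lambda>b. b(n := True)) ` basis n"
  proof
    fix b assume b: "b \<in> basis (Suc n)"
    show "b \<in> basis n \<union> (\<lambda>b. b(n := True)) ` basis n"
    proof (cases "b n")
      case True
      then have "b = (b(n := False))(n := True)" by (simp add: fun_upd_idem)
      moreover have "b(n := False) \<in> basis n" using b by (auto simp: basis_def)
      ultimately show ?thesis by blast
    next
      case False
      have "\<not> b i" if "n \<le> i" for i
        using b False that by (cases "i = n") (auto simp: basis_def)
      then have "b \<in> basis n" by (simp add: basis_def)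
      then show ?thesis by blast
    qed
  qed
qed (auto simp: basis_def)

lemma basis_0: "basis 0 = {\<lambda>_. False}"
  by (auto simp: basis_def)

lemma finite_basis: "finite (basis n)"
  by (induction n) (simp_all add: basis_0 basis_Suc)

lemma sum_basis_prod:
  fixes g :: "nat \<Rightarrow> bool \<Rightarrow> 'a::comm_semiring_1"
  shows "(\<Sum>b\<in>basis n. \<Prod>j<n. g j (b j)) = (\<Prod>j<n. g j False + g j True)"
proof (induction n)
  case 0
  show ?case by (simp add: basis_0)
next
  case (Suc n)
  have "basis n \<inter> (\<lambda>b. b(n := True)) ` basis n = {}" by (auto simp: basis_def)
  moreover have "inj_on (\<lambda>b. b(n := True)) (basis n)"
  proof (rule inj_onI)
    fix b b' assume "b \<in> basis n" "b' \<in> basis n" "b(n := True) = b'(n := True)"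
    then show "b = b'" by (auto simp: basis_def fun_eq_iff split: if_splits)
  qed
  ultimately have "(\<Sum>b\<in>basis (Suc n). \<Prod>j<Suc n. g j (b j))
      = (\<Sum>b\<in>basis n. \<Prod>j<Suc n. g j (b j)) + (\<Sum>b\<in>basis n. \<Prod>j<Suc n. g j ((b(n := True)) j))"
    unfolding basis_Suc by (simp add: sum.union_disjoint finite_basis sum.reindex)
  also have "\<dots> = (\<Sum>b\<in>basis n. (\<Prod>j<n. g j (b j)) * g n False) + (\<Sum>b\<in>basis n. (\<Prod>j<n. g j (b j)) * g n True)"
    by (intro arg_cong2[where f = "(+)"] sum.cong) (auto simp: basis_def)
  also have "\<dots> = (\<Sum>b\<in>basis n. \<Prod>j<n. g j (b j)) * (g n False + g n True)"
    by (simp add: sum_distrib_right distrib_left sum.distrib)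
  finally show ?case by (simp add: Suc.IH)
qed

lemma braket_product_state:
  "braket n (product_state n h) (product_state n h') =
     (\<Prod>j<n. cnj (h j False) * h' j False + cnj (h j True) * h' j True)"
proof -
  have "braket n (product_state n h) (product_state n h') = (\<Sum>b\<in>basis n. \<Prod>j<n. cnj (h j (b j)) * h' j (b j))"
    by (simp add: braket_def product_state_def prod.distrib)
  then show ?thesis using sum_basis_prod[where g = "\<lambda>j u. cnj (h j u) * h' j u"] by simp
qed

definition input_factor :: "nat \<Rightarrow> nat \<Rightarrow> (nat \<Rightarrow> nat) \<Rightarrow> nat \<Rightarrow> bool \<Rightarrow> complex" where
  "input_factor d m \<eta> j =
     (if j < d * m then (\<lambda>u. if u = odd (\<eta> (j div m) div 2 ^ (j mod m)) then 1 else 0) else plus_vec)"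

lemma register_bits_iff:
  fixes \<eta> :: "nat \<Rightarrow> nat"
  shows "(\<forall>i<d. \<forall>j<m. b (i * m + j) = odd (\<eta> i div 2 ^ j)) \<longleftrightarrow>
   (\<forall>t<d * m. b t = odd (\<eta> (t div m) div 2 ^ (t mod m)))"
proof
  assume bits: "\<forall>i<d. \<forall>j<m. b (i * m + j) = odd (\<eta> i div 2 ^ j)"
  show "\<forall>t<d * m. b t = odd (\<eta> (t div m) div 2 ^ (t mod m))"
  proof (intro allI impI)
    fix t assume t: "t < d * m"
    then have "0 < m" by (cases m) auto
    then have "t div m < d" "t mod m < m" using t by (simp_all add: div_less_iff_less_mult)
    then have "b (t div m * m + t mod m) = odd (\<eta> (t div m) div 2 ^ (t mod m))"
      using bits by blast
    then show "b t = odd (\<eta> (t div m) div 2 ^ (t mod m))" by simp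
  qed
next
  assume bits: "\<forall>t<d * m. b t = odd (\<eta> (t div m) div 2 ^ (t mod m))"
  show "\<forall>i<d. \<forall>j<m. b (i * m + j) = odd (\<eta> i div 2 ^ j)"
  proof (intro allI impI)
    fix i j assume "i < d" "j < m"
    then have "i * m + j < (i + 1) * m" by simp
    also have "\<dots> \<le> d * m" using \<open>i < d\<close> by (intro mult_right_mono) auto
    finally have "i * m + j < d * m" .
    then show "b (i * m + j) = odd (\<eta> i div 2 ^ j)"
      using bits \<open>j < m\<close> by simp
  qed
qed

lemma in_state_product_state: "in_state d m 0 \<eta> = product_state (d * m + d) (input_factor d m \<eta>)"
proof
  fix b
  let ?bit = "\<lambda>t. odd (\<eta> (t div m) div 2 ^ (t mod m))"
  have "product_state (d * m + d) (input_factor d m \<eta>) b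
      = (\<Prod>j<d * m. input_factor d m \<eta> j (b j)) * (\<Prod>j\<in>{d * m..<d * m + d}. input_factor d m \<eta> j (b j))"
    unfolding product_state_def ivl_disj_un_one(2)[of "d * m" "d * m + d", symmetric, simplified]
    by (rule prod.union_disjoint) auto
  also have "(\<Prod>j<d * m. input_factor d m \<eta> j (b j)) = (\<Prod>j<d * m. if b j = ?bit j then 1 else 0)"
    by (rule prod.cong) (auto simp: input_factor_def)
  also have "\<dots> = (if \<forall>j<d * m. b j = ?bit j then 1 else 0)"
    by (auto simp: prod_zero_iff)
  also have "(\<Prod>j\<in>{d * m..<d * m + d}. input_factor d m \<eta> j (b j)) = complex_of_real ((1 / sqrt 2) ^ d)"
    by (simp add: input_factor_def plus_vec_def)
  finally show "in_state d m 0 \<eta> b = product_state (d * m + d) (input_factor d m \<eta>) b"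
    by (simp add: in_state_def register_bits_iff)
qed

lemma braket_qsp_layer:
  "braket (d * m + d) (in_state d m 0 \<eta>) (circ_sem y (qsp_layer (d * m) \<phi>\<^sub>0 \<phi>s d) (in_state d m 0 \<eta>))
     = (\<Prod>i<d. plus_amp (qsp_run (y i) (\<phi>\<^sub>0 i) (\<phi>s i) plus_vec))"
proof -
  define D where "D = d * m"
  define h where "h = input_factor d m \<eta>"
  define h' where "h' j = (if D \<le> j \<and> j < D + d then qsp_run (y (j - D)) (\<phi>\<^sub>0 (j - D)) (\<phi>s (j - D)) (h j)
    else h j)" for j
  define S where "S j = cnj (h j False) * h' j False + cnj (h j True) * h' j True" for j
  have "in_state d m 0 \<eta> = product_state (D + d) h"
    by (simp add: in_state_product_state D_def h_def)
  moreover have "circ_sem y (qsp_layer D \<phi>\<^sub>0 \<phi>s d) (product_state (D + d) h) = product_state (D + d) h'"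
    unfolding h'_def by (rule circ_sem_qsp_layer) simp
  ultimately have "braket (D + d) (in_state d m 0 \<eta>) (circ_sem y (qsp_layer D \<phi>\<^sub>0 \<phi>s d) (in_state d m 0 \<eta>))
      = (\<Prod>j<D + d. S j)"
    by (simp add: braket_product_state S_def)
  also have "\<dots> = (\<Prod>j<D. S j) * (\<Prod>j\<in>{D..<D + d}. S j)"
    unfolding ivl_disj_un_one(2)[of D "D + d", symmetric, simplified] by (rule prod.union_disjoint) auto
  also have "(\<Prod>j<D. S j) = 1"
    by (rule prod.neutral) (auto simp: S_def h'_def h_def input_factor_def D_def)
  also have "(\<Prod>j\<in>{D..<D + d}. S j) = (\<Prod>i<d. S (i + D))"
    using prod.shift_bounds_nat_ivl[of S 0 D d] by (simp add: atLeast0LessThan add.commute)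
  also have "\<dots> = (\<Prod>i<d. plus_amp (qsp_run (y i) (\<phi>\<^sub>0 i) (\<phi>s i) plus_vec))"
    by (rule prod.cong) (auto simp: S_def h'_def h_def input_factor_def D_def plus_amp_def)
  finally show ?thesis by (simp add: D_def)
qed

lemma qsp_phases_for_monomial:
  assumes "\<bar>c\<bar> \<le> 1" "0 < d"
  obtains \<phi>\<^sub>0 \<phi>s where "\<And>i. length (\<phi>s i) = \<alpha> i"
    "\<And>y. (\<And>i. i < d \<Longrightarrow> \<bar>y i\<bar> \<le> 1) \<Longrightarrow>
       (\<Prod>i<d. plus_amp (qsp_run (y i) (\<phi>\<^sub>0 i) (\<phi>s i) plus_vec)) = complex_of_real (c * mono_pow d y \<alpha>)"
proof -
  define c' where "c' i = (if i = 0 then c else 1)" for i :: nat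
  have "\<forall>i. \<exists>\<phi>\<^sub>0 \<phi>s. length \<phi>s = \<alpha> i \<and>
      (\<forall>y. \<bar>y\<bar> \<le> 1 \<longrightarrow> plus_amp (qsp_run y \<phi>\<^sub>0 \<phi>s plus_vec) = complex_of_real (c' i * y ^ \<alpha> i))"
    using assms(1) by (intro allI qsp_monomial) (simp add: c'_def)
  then obtain \<phi>\<^sub>0 \<phi>s where len: "\<And>i. length (\<phi>s i) = \<alpha> i" and amp:
    "\<And>i y. \<bar>y\<bar> \<le> 1 \<Longrightarrow> plus_amp (qsp_run y (\<phi>\<^sub>0 i) (\<phi>s i) plus_vec) = complex_of_real (c' i * y ^ \<alpha> i)"
    by metis
  have "(\<Prod>i<d. plus_amp (qsp_run (y i) (\<phi>\<^sub>0 i) (\<phi>s i) plus_vec)) = complex_of_real (c * mono_pow d y \<alpha>)"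
    if "\<And>i. i < d \<Longrightarrow> \<bar>y i\<bar> \<le> 1" for y
  proof -
    have "(\<Prod>i<d. plus_amp (qsp_run (y i) (\<phi>\<^sub>0 i) (\<phi>s i) plus_vec))
        = complex_of_real ((\<Prod>i<d. c' i) * mono_pow d y \<alpha>)"
      using that by (simp add: amp mono_pow_def prod.distrib)
    also have "(\<Prod>i<d. c' i) = c" using assms(2) by (simp add: c'_def prod.delta)
    finally show ?thesis .
  qed
  with len show ?thesis by (rule that)
qed

lemma monomial_qsp_circuit:
  fixes c :: real
  assumes "\<bar>c\<bar> \<le> 1" "0 < d"
  obtains gs where "\<forall>g\<in>set gs. wf_gate (d * m + d) d g"
    "circ_depth (d * m + d) gs \<le> 2 * mi_norm d \<alpha> + 1"
    "num_params gs = d + mi_norm d \<alpha>"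
    "\<And>y. (\<And>i. i < d \<Longrightarrow> \<bar>y i\<bar> \<le> 1) \<Longrightarrow>
       braket (d * m + d) (in_state d m 0 \<eta>) (circ_sem y gs (in_state d m 0 \<eta>))
         = complex_of_real (c * mono_pow d y \<alpha>)"
proof -
  obtain \<phi>\<^sub>0 \<phi>s where len: "\<And>i. length (\<phi>s i) = \<alpha> i" and amp:
    "\<And>y. (\<And>i. i < d \<Longrightarrow> \<bar>y i\<bar> \<le> 1) \<Longrightarrow>
       (\<Prod>i<d. plus_amp (qsp_run (y i) (\<phi>\<^sub>0 i) (\<phi>s i) plus_vec)) = complex_of_real (c * mono_pow d y \<alpha>)"
    by (rule qsp_phases_for_monomial[OF assms, where \<alpha> = \<alpha>]) blast
  define gs where "gs = qsp_layer (d * m) \<phi>\<^sub>0 \<phi>s d"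
  have "\<forall>g\<in>set gs. wf_gate (d * m + d) d g"
    by (auto simp: gs_def elim: gate_in_qsp_layer)
  moreover have "\<alpha> i \<le> mi_norm d \<alpha>" if "i < d" for i
    using member_le_sum[of i "{..<d}" \<alpha>] that by (simp add: mi_norm_def)
  then have "circ_depth (d * m + d) gs \<le> 2 * mi_norm d \<alpha> + 1"
    unfolding gs_def by (intro circ_depth_qsp_layer) (simp add: len)
  moreover have "num_params gs = d + mi_norm d \<alpha>"
    by (simp only: gs_def num_params_qsp_layer len mi_norm_def sum.distrib) simp
  moreover have "braket (d * m + d) (in_state d m 0 \<eta>) (circ_sem y gs (in_state d m 0 \<eta>))
      = complex_of_real (c * mono_pow d y \<alpha>)" if "\<And>i. i < d \<Longrightarrow> \<bar>y i\<bar> \<le> 1" for y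
    unfolding gs_def braket_qsp_layer using that by (rule amp)
  ultimately show ?thesis by (rule that)
qed

lemma width_bound:
  assumes "1 \<le> K"
  shows "real (d * reg_bits K + d) \<le> 2 * real d * (log 2 (real K) + 1)"
proof -
  have "0 \<le> log 2 (real K)" using assms by simp
  then have "real (reg_bits K) \<le> log 2 (real K) + 1"
    unfolding reg_bits_def by linarith
  then have "real d * real (reg_bits K) \<le> real d * (log 2 (real K) + 1)"
    by (intro mult_left_mono) simp_all
  moreover have "real d * 1 \<le> real d * (log 2 (real K) + 1)"
    using \<open>0 \<le> log 2 (real K)\<close> by (intro mult_left_mono) simp_all
  ultimately show ?thesis by (simp only: of_nat_add of_nat_mult)
qed

lemma shifted_point_bound:
  assumes "x \<in> cube d" "\<forall>i<d. \<eta> i < K" "i < d"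
  shows "\<bar>x i - real (\<eta> i) / real K\<bar> \<le> 1"
proof -
  have "0 \<le> x i" "x i \<le> 1" using assms by (auto simp: cube_def)
  moreover have "0 \<le> real (\<eta> i) / real K" "real (\<eta> i) / real K \<le> 1"
    using assms by (auto simp: divide_simps)
  ultimately show ?thesis by linarith
qed

lemma taylor_term_circuit:
  fixes c :: real and \<alpha> \<eta> :: "nat \<Rightarrow> nat"
  assumes "\<bar>c\<bar> \<le> 1" "1 \<le> d" "1 \<le> K" "mi_norm d \<alpha> \<le> s" "\<forall>i<d. \<eta> i < K"
  shows "\<exists>(gs::gate list) (a::nat).
        let m = reg_bits K; n = d * m + a + d; \<psi>0 = in_state d m a \<eta> in
        (\<forall>g\<in>set gs. wf_gate n d g) \<and>
        real n \<le> 2 * real d * (log 2 (real K) + 1) \<and>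
        real (circ_depth n gs) \<le> 2 * (real K ^ d + real s) \<and>
        num_params gs \<le> K ^ d + s + d \<and>
        (\<forall>x\<in>cube d.
           braket n \<psi>0 (circ_sem (\<lambda>i. x i - real (\<eta> i) / real K) gs \<psi>0) =
           complex_of_real (c * mono_pow d (\<lambda>i. x i - real (\<eta> i) / real K) \<alpha>))"
proof -
  define m where "m = reg_bits K"
  have "0 < d" using assms(2) by simp
  obtain gs where wf: "\<forall>g\<in>set gs. wf_gate (d * m + d) d g"
    and depth: "circ_depth (d * m + d) gs \<le> 2 * mi_norm d \<alpha> + 1"
    and params: "num_params gs = d + mi_norm d \<alpha>"
    and amp: "\<And>y. (\<And>i. i < d \<Longrightarrow> \<bar>y i\<bar> \<le> 1) \<Longrightarrow>
       braket (d * m + d) (in_state d m 0 \<eta>) (circ_sem y gs (in_state d m 0 \<eta>))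
         = complex_of_real (c * mono_pow d y \<alpha>)"
    by (rule monomial_qsp_circuit[OF assms(1) \<open>0 < d\<close>, where m = m and \<alpha> = \<alpha> and \<eta> = \<eta>]) blast
  have "real (circ_depth (d * m + d) gs) \<le> 2 * real s + 1"
    using depth assms(4) by linarith
  moreover have "1 \<le> real K ^ d" using assms(3) by simp
  ultimately have "real (circ_depth (d * m + d) gs) \<le> 2 * (real K ^ d + real s)"
    unfolding distrib_left by linarith
  then show ?thesis
    unfolding Let_def m_def[symmetric] add_0_right
    using wf width_bound[OF assms(3), of d] params assms(4,5) amp shifted_point_bound
    by (intro exI[of _ gs] exI[of _ 0]) (simp add: m_def)
qed

theorem corollaryS4:
  "\<exists>C::real. \<forall>(d::nat) (K::nat) (s::nat) (\<beta>::real) (f::(nat \<Rightarrow> real) \<Rightarrow> real)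
       (\<alpha>::nat \<Rightarrow> nat) (\<eta>::nat \<Rightarrow> nat).
     1 \<le> d \<longrightarrow> 1 \<le> K \<longrightarrow> 1 \<le> s \<longrightarrow> holder_smooth d \<beta> f \<longrightarrow>
     (\<forall>\<alpha>' \<eta>'. multi_index d \<alpha>' \<and> mi_norm d \<alpha>' \<le> s \<and> (\<forall>i<d. \<eta>' i < K) \<longrightarrow>
        tcoef d f \<alpha>' (grid_point d K \<eta>') \<in> {-1..1}) \<longrightarrow>
     multi_index d \<alpha> \<longrightarrow> mi_norm d \<alpha> \<le> s \<longrightarrow> (\<forall>i<d. \<eta> i < K) \<longrightarrow>
     (\<exists>(gs::gate list) (a::nat).
        let m = reg_bits K; n = d * m + a + d; \<psi>0 = in_state d m a \<eta> in
        (\<forall>g\<in>set gs. wf_gate n d g) \<and>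
        real n \<le> C * real d * (log 2 (real K) + 1) \<and>
        real (circ_depth n gs) \<le> C * (real K ^ d + real s) \<and>
        num_params gs \<le> K ^ d + s + d \<and>
        (\<forall>x\<in>cube d.
           braket n \<psi>0 (circ_sem (\<lambda>i. x i - real (\<eta> i) / real K) gs \<psi>0) =
           complex_of_real (tcoef d f \<alpha> (grid_point d K \<eta>) *
              mono_pow d (\<lambda>i. x i - real (\<eta> i) / real K) \<alpha>)))"
  by (intro exI[of _ 2] allI impI taylor_term_circuit) (auto simp: abs_le_iff)

end
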